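(* Assume $|V|\ge 3$. Suppose the notion of strategic manipulation is modified by dropping the requirement that all colluders in $C$ have the same most preferred value in the type vector $\vec\theta$ of condition (b). Then there is no $(c,f)$-resilient consensus protocol for any $c\ge 2$. Moreover, if in addition condition (b) is strengthened to require that no colluder is worse off (in addition to some colluder being strictly better off), there is still no $(c,f)$-resilient consensus protocol for any $c\ge 2$ and $f\ge 1$.
   Context: Model. There are $n$ agents $\Pi=\{1,\dots,n\}$ proceeding in synchronous rounds $1,2,\dots$. In each round every agent first chooses, for each agent $j$, a message to send to $j$ or no message; then it receives the messages sent to it in that round; then it updates its local state. Channels are reliable. A failure pattern $F$ is a subset of $\{(i,j,r)\}$, where $(i,j,r)\in F$ means $i$'s round-$r$ message to $j$ would be delivered if sent; if $(i,j,r)\notin F$ then $(i,j',r')\notin F$ for all $j'$ and $r'>r$. Agent $i$ is correct if $(i,j,r)\in F$ for all $j,r$, faulty otherwise. In a system with at most $f$ crash failures only failure patterns with at most $f$ faulty agents occur. $V$ is a finite set of proposal values; the private type $\theta_i$ is a strict total order on $V$. A (deterministic) strategy $s_i$ maps $\theta_i$ to a function from (round $r$, messages received in rounds $1..r$) to (messages for round $r+1$, a decision in $V\cup\{\top\}$ or $\bot$), $\top\notin V$; each agent decides at most once. A protocol is a profile $\vec s$; the run $R(F,\vec\theta,\vec s)$ is determined. Legal profile: for every admissible $F$ and every $\vec\theta$: Termination (every correct agent eventually decides), Uniform Agreement (no two agents decide differently), Validity (any decision is an element of $V$ that is the most preferred value of some agent). Utility of $i$: $0$ if $i$ crashes in $F$;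 if consensus holds with decision $d$, a positive value strictly increasing in $i$'s preference for $d$; $-\infty$ if consensus is violated. Colluders $C$ may use strategies depending on all colluders' types. Original definition: $C$ can strategically manipulate a legal $\vec s$ if there is $\vec s'_C$ with (a) $(\vec s_{-C},\vec s'_C)$ legal, and (b) some admissible $F$ and some $\vec\theta$ in which all members of $C$ have the same most preferred value, such that some $i\in C$ has strictly higher utility under $(\vec s_{-C},\vec s'_C)$ than under $\vec s$. A $(c,f)$-resilient consensus protocol is a legal profile that no group of size at most $c$ can strategically manipulate, in a system with at most $f$ crash failures. *)

theory Defs
  imports Main "HOL-Library.Extended_Real"
begin

text \<open>Agents form a finite type 'ag (so n = CARD('ag)); proposal values form a
finite type 'v (so V = UNIV and |V| = CARD('v)); messages have an arbitrary type 'm.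
A type (preference) is a relation theta on 'v; (x, y) in theta means that y is
strictly preferred to x.\<close>

datatype 'v dec = Val 'v | TopDec  \<comment> \<open>V extended with the special value top\<close>

type_synonym 'ag failure_pattern = "('ag \<times> 'ag \<times> nat) set"

text \<open>Messages received by an agent: round k (k >= 1) and sender i give the
message received (None = no message).\<close>
type_synonym ('ag, 'm) hist = "nat \<Rightarrow> 'ag \<Rightarrow> 'm option"

text \<open>Given round r and the messages received in rounds 1..r, produce the messages
for round r+1 (per recipient) and a decision (None = bottom, i.e. no decision).\<close>
type_synonym ('ag, 'm, 'v) behaviour =
  "nat \<Rightarrow> ('ag, 'm) hist \<Rightarrow> ('ag \<Rightarrow> 'm option) \<times> 'v dec option"

type_synonym ('ag, 'm, 'v) strategy = "'v rel \<Rightarrow> ('ag, 'm, 'v) behaviour"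

text \<open>Generalized profile: each agent's behaviour may depend on the whole type
vector (needed for colluders, whose strategies depend on all colluders' types).\<close>
type_synonym ('ag, 'm, 'v) gprofile = "'ag \<Rightarrow> ('ag \<Rightarrow> 'v rel) \<Rightarrow> ('ag, 'm, 'v) behaviour"

definition is_top :: "'v rel \<Rightarrow> 'v \<Rightarrow> bool" where
  "is_top th v \<longleftrightarrow> (\<forall>w. w \<noteq> v \<longrightarrow> (w, v) \<in> th)"

definition admissible_types :: "('ag \<Rightarrow> 'v rel) \<Rightarrow> bool" where
  "admissible_types th \<longleftrightarrow> (\<forall>i. strict_linear_order (th i))"

definition correct :: "'ag failure_pattern \<Rightarrow> 'ag \<Rightarrow> bool" where
  "correct F i \<longleftrightarrow> (\<forall>j r. (i, j, r) \<in> F)"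

definition admissible_fp :: "nat \<Rightarrow> 'ag failure_pattern \<Rightarrow> bool" where
  "admissible_fp f F \<longleftrightarrow>
     (\<forall>i j r j' r'. (i, j, r) \<notin> F \<longrightarrow> r' > r \<longrightarrow> (i, j', r') \<notin> F) \<and>
     card {i. \<not> correct F i} \<le> f"

primrec hist :: "'ag failure_pattern \<Rightarrow> ('ag \<Rightarrow> 'v rel) \<Rightarrow> ('ag, 'm, 'v) gprofile
                 \<Rightarrow> nat \<Rightarrow> 'ag \<Rightarrow> ('ag, 'm) hist" where
  "hist F th sg 0 j = (\<lambda>k i. None)"
| "hist F th sg (Suc r) j =
     (\<lambda>k i. if k = Suc r
            then (if (i, j, Suc r) \<in> F then fst (sg i th r (hist F th sg r i)) j else None)
            else hist F th sg r j k i)"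

definition out_of :: "'ag failure_pattern \<Rightarrow> ('ag \<Rightarrow> 'v rel) \<Rightarrow> ('ag, 'm, 'v) gprofile
                      \<Rightarrow> 'ag \<Rightarrow> nat \<Rightarrow> ('ag \<Rightarrow> 'm option) \<times> 'v dec option" where
  "out_of F th sg i r = sg i th r (hist F th sg r i)"

text \<open>Agent i is still alive at the end of round r iff it has not crashed in rounds 1..r.
A crashed agent takes no further steps (in particular it makes no further decisions).\<close>
definition alive :: "'ag failure_pattern \<Rightarrow> 'ag \<Rightarrow> nat \<Rightarrow> bool" where
  "alive F i r \<longleftrightarrow> (\<forall>j r'. 1 \<le> r' \<and> r' \<le> r \<longrightarrow> (i, j, r') \<in> F)"

text \<open>Each agent decides at most once: its decision is its first non-bottom
decision out_of, produced while it is alive.\<close>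
definition decides :: "'ag failure_pattern \<Rightarrow> ('ag \<Rightarrow> 'v rel) \<Rightarrow> ('ag, 'm, 'v) gprofile
                       \<Rightarrow> 'ag \<Rightarrow> 'v dec \<Rightarrow> bool" where
  "decides F th sg i d \<longleftrightarrow>
     (\<exists>r. alive F i r \<and> snd (out_of F th sg i r) = Some d \<and>
          (\<forall>r' < r. snd (out_of F th sg i r') = None))"

definition consensus_run :: "'ag failure_pattern \<Rightarrow> ('ag \<Rightarrow> 'v rel) \<Rightarrow> ('ag, 'm, 'v) gprofile \<Rightarrow> bool" where
  "consensus_run F th sg \<longleftrightarrow>
     (\<forall>i. correct F i \<longrightarrow> (\<exists>d. decides F th sg i d)) \<and>
     (\<forall>i j d d'. decides F th sg i d \<and> decides F th sg j d' \<longrightarrow> d = d') \<and>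
     (\<forall>i d. decides F th sg i d \<longrightarrow> (\<exists>v j. d = Val v \<and> is_top (th j) v))"

definition legal_g :: "nat \<Rightarrow> ('ag, 'm, 'v) gprofile \<Rightarrow> bool" where
  "legal_g f sg \<longleftrightarrow> (\<forall>F th. admissible_fp f F \<longrightarrow> admissible_types th \<longrightarrow> consensus_run F th sg)"

definition embed :: "('ag \<Rightarrow> ('ag, 'm, 'v) strategy) \<Rightarrow> ('ag, 'm, 'v) gprofile" where
  "embed s = (\<lambda>i th. s i (th i))"

definition legal :: "nat \<Rightarrow> ('ag \<Rightarrow> ('ag, 'm, 'v) strategy) \<Rightarrow> bool" where
  "legal f s \<longleftrightarrow> legal_g f (embed s)"

definition utility_fun :: "('ag \<Rightarrow> 'v rel \<Rightarrow> 'v \<Rightarrow> real) \<Rightarrow> bool" where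
  "utility_fun u \<longleftrightarrow>
     (\<forall>i th v. strict_linear_order th \<longrightarrow> u i th v > 0) \<and>
     (\<forall>i th v w. strict_linear_order th \<longrightarrow> (v, w) \<in> th \<longrightarrow> u i th v < u i th w)"

definition utility :: "('ag \<Rightarrow> 'v rel \<Rightarrow> 'v \<Rightarrow> real) \<Rightarrow> 'ag failure_pattern \<Rightarrow> ('ag \<Rightarrow> 'v rel)
                       \<Rightarrow> ('ag, 'm, 'v) gprofile \<Rightarrow> 'ag \<Rightarrow> ereal" where
  "utility u F th sg i =
     (if \<not> correct F i then 0
      else if consensus_run F th sg
           then ereal (u i (th i) (THE v. decides F th sg i (Val v)))
           else -\<infinity>)"

definition colluder_strategy :: "'ag set \<Rightarrow> ('ag, 'm, 'v) gprofile \<Rightarrow> bool" where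
  "colluder_strategy C s' \<longleftrightarrow>
     (\<forall>i\<in>C. \<forall>th th'. (\<forall>j\<in>C. th j = th' j) \<longrightarrow> s' i th = s' i th')"

definition deviate :: "('ag \<Rightarrow> ('ag, 'm, 'v) strategy) \<Rightarrow> 'ag set \<Rightarrow> ('ag, 'm, 'v) gprofile
                       \<Rightarrow> ('ag, 'm, 'v) gprofile" where
  "deviate s C s' = (\<lambda>i th. if i \<in> C then s' i th else s i (th i))"

text \<open>Modified manipulation (i): as the original, but without requiring that all
colluders have the same most preferred value.\<close>
definition can_manipulate_weak ::
  "('ag \<Rightarrow> 'v rel \<Rightarrow> 'v \<Rightarrow> real) \<Rightarrow> nat \<Rightarrow> 'ag set \<Rightarrow> ('ag \<Rightarrow> ('ag, 'm, 'v) strategy) \<Rightarrow> bool" where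
  "can_manipulate_weak u f C s \<longleftrightarrow>
     (\<exists>s'. colluder_strategy C s' \<and> legal_g f (deviate s C s') \<and>
        (\<exists>F th. admissible_fp f F \<and> admissible_types th \<and>
           (\<exists>i\<in>C. utility u F th (deviate s C s') i > utility u F th (embed s) i)))"

definition can_manipulate_pareto ::
  "('ag \<Rightarrow> 'v rel \<Rightarrow> 'v \<Rightarrow> real) \<Rightarrow> nat \<Rightarrow> 'ag set \<Rightarrow> ('ag \<Rightarrow> ('ag, 'm, 'v) strategy) \<Rightarrow> bool" where
  "can_manipulate_pareto u f C s \<longleftrightarrow>
     (\<exists>s'. colluder_strategy C s' \<and> legal_g f (deviate s C s') \<and>
        (\<exists>F th. admissible_fp f F \<and> admissible_types th \<and>
           (\<forall>i\<in>C. utility u F th (deviate s C s') i \<ge> utility u F th (embed s) i) \<and>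
           (\<exists>i\<in>C. utility u F th (deviate s C s') i > utility u F th (embed s) i)))"

definition resilient_weak ::
  "('ag \<Rightarrow> 'v rel \<Rightarrow> 'v \<Rightarrow> real) \<Rightarrow> nat \<Rightarrow> nat \<Rightarrow> ('ag \<Rightarrow> ('ag, 'm, 'v) strategy) \<Rightarrow> bool" where
  "resilient_weak u c f s \<longleftrightarrow> legal f s \<and> (\<forall>C. card C \<le> c \<longrightarrow> \<not> can_manipulate_weak u f C s)"

definition resilient_pareto ::
  "('ag \<Rightarrow> 'v rel \<Rightarrow> 'v \<Rightarrow> real) \<Rightarrow> nat \<Rightarrow> nat \<Rightarrow> ('ag \<Rightarrow> ('ag, 'm, 'v) strategy) \<Rightarrow> bool" where
  "resilient_pareto u c f s \<longleftrightarrow> legal f s \<and> (\<forall>C. card C \<le> c \<longrightarrow> \<not> can_manipulate_pareto u f C s)"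

end

theory Submission
  imports Defs "HOL-Library.Countable"
begin

text \<open>Once the colluders need not share a most preferred value, two colluders k and j can
  profit from k simply running the protocol with j's type in place of its own: the deviating
  profile is legal, since it is the original protocol run on another admissible type vector
  (and a most preferred value of j's type is still somebody's most preferred value).
  It remains to find type vectors where this helps j.  Give every agent one of two orders A
  and B with distinct tops a and b, and let S be the set of agents given B.  In failure-free
  runs everybody decides a when S is empty and b when S contains all agents, so some k is
  pivotal: the decision is b for S but a for S - {k}.  If j is outside S, k copying j's type
  turns S into S - {k} and moves the decision to a, which j prefers; if j is in S, k copying
  j's type turns S - {k} into S and moves it to b, which j prefers.
  For the Pareto variant, k additionally crashes after both decisions of j have been made, so
  k's utility is 0 with or without the deviation.  Only two distinct values are needed, so
  |V| >= 3 is used only as |V| >= 2.\<close>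

lemma hist_cong:
  assumes "\<And>i. sg i th = sg' i th'"
  shows "hist F th sg r = hist F th' sg' r"
  by (induction r) (simp_all only: hist.simps assms)

lemma decides_cong:
  assumes "\<And>i. sg i th = sg' i th'"
  shows "decides F th sg = decides F th' sg'"
proof -
  have hist_eq: "hist F th sg r = hist F th' sg' r" for r
    by (rule hist_cong) (rule assms)
  show ?thesis
    unfolding fun_eq_iff decides_def out_of_def by (simp add: hist_eq assms)
qed

lemma hist_eq_failure_free:
  assumes "\<And>i j r'. r' \<le> R \<Longrightarrow> (i, j, r') \<in> F" and "r \<le> R"
  shows "hist F th sg r = hist UNIV th sg r"
  using assms(2)
proof (induction r)
  case (Suc r)
  then have IH: "hist F th sg r = hist UNIV th sg r" by simp
  show ?case using Suc.prems by (auto simp: IH assms(1) fun_eq_iff)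
qed (simp add: fun_eq_iff)

lemma admissible_fp_UNIV [simp]: "admissible_fp f UNIV"
  by (simp add: admissible_fp_def correct_def)

lemma correct_UNIV [simp]: "correct UNIV i"
  by (simp add: correct_def)

definition crash_after :: "'ag \<Rightarrow> nat \<Rightarrow> 'ag failure_pattern" where
  "crash_after k R = {(i, j, r). i \<noteq> k \<or> r \<le> R}"

lemma correct_crash_after [simp]: "correct (crash_after k R) i \<longleftrightarrow> i \<noteq> k"
  unfolding correct_def crash_after_def using not_less_eq_eq by auto

lemma admissible_fp_crash_after:
  assumes "1 \<le> f"
  shows "admissible_fp f (crash_after k R)"
proof -
  have "{i. \<not> correct (crash_after k R) i} = {k}" by auto
  then show ?thesis using assms unfolding admissible_fp_def crash_after_def by auto
qed

lemma decides_crash_after: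
  assumes "decides UNIV th sg j d" and "j \<noteq> k"
  shows "\<exists>R. \<forall>R' \<ge> R. decides (crash_after k R') th sg j d"
proof -
  obtain r where r: "snd (out_of UNIV th sg j r) = Some d"
      "\<forall>r' < r. snd (out_of UNIV th sg j r') = None"
    using assms(1) unfolding decides_def by blast
  have "decides (crash_after k R') th sg j d" if "r \<le> R'" for R'
  proof -
    have "out_of (crash_after k R') th sg j r' = out_of UNIV th sg j r'" if "r' \<le> r" for r'
    proof -
      have "hist (crash_after k R') th sg r' = hist UNIV th sg r'"
        by (rule hist_eq_failure_free[of R']) (use that \<open>r \<le> R'\<close> in \<open>auto simp: crash_after_def\<close>)
      then show ?thesis by (simp add: out_of_def)
    qed
    then show ?thesis
      unfolding decides_def using r assms(2)
      by (intro exI[of _ r]) (auto simp: alive_def crash_after_def)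
  qed
  then show ?thesis by blast
qed

lemma failure_free_decision:
  fixes sg :: "('ag, 'm, 'v) gprofile"
  assumes "legal_g f sg" and "admissible_types th"
  obtains v where "\<And>i d. decides UNIV th sg i d \<longleftrightarrow> d = Val v" and "\<exists>j. is_top (th j) v"
proof -
  have run: "consensus_run UNIV th sg"
    using assms unfolding legal_g_def by simp
  then have decides_some: "\<exists>d. decides UNIV th sg i d" for i
    unfolding consensus_run_def by simp
  have agreement: "d = d'" if "decides UNIV th sg i d" and "decides UNIV th sg i' d'" for i i' d d'
    using run that unfolding consensus_run_def by blast
  obtain d where d: "decides UNIV th sg undefined d"
    using decides_some by blast
  then obtain v j where "d = Val v" and "is_top (th j) v"
    using run unfolding consensus_run_def by blast
  moreover have "decides UNIV th sg i d' \<longleftrightarrow> d' = d" for i d'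
    using d decides_some agreement by blast
  ultimately show thesis using that by blast
qed

lemma utility_eq_decision:
  assumes "consensus_run F th sg" and "correct F i" and "decides F th sg i (Val v)"
  shows "utility u F th sg i = ereal (u i (th i) v)"
proof -
  have "(THE v. decides F th sg i (Val v)) = v"
    using assms(1,3) unfolding consensus_run_def by (intro the_equality) blast+
  then show ?thesis using assms by (simp add: utility_def)
qed

definition copy_type :: "'ag \<Rightarrow> 'ag \<Rightarrow> ('ag \<Rightarrow> ('ag, 'm, 'v) strategy) \<Rightarrow> ('ag, 'm, 'v) gprofile"
  where "copy_type k j s = (\<lambda>i th. s i ((th(k := th j)) i))"

lemma colluder_strategy_copy_type: "colluder_strategy {k, j} (copy_type k j s)"
  unfolding colluder_strategy_def copy_type_def by auto

lemma deviate_copy_type: "deviate s {k, j} (copy_type k j s) i th = embed s i (th(k := th j))"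
  by (auto simp: deviate_def copy_type_def embed_def)

lemma decides_deviate_copy_type:
  "decides F th (deviate s {k, j} (copy_type k j s)) = decides F (th(k := th j)) (embed s)"
  by (rule decides_cong) (rule deviate_copy_type)

lemma legal_deviate_copy_type:
  fixes s :: "'ag \<Rightarrow> ('ag, 'm, 'v) strategy"
  assumes "legal f s"
  shows "legal_g f (deviate s {k, j} (copy_type k j s))"
  unfolding legal_g_def
proof (intro allI impI)
  fix F :: "'ag failure_pattern" and th :: "'ag \<Rightarrow> 'v rel"
  assume F: "admissible_fp f F" and th: "admissible_types th"
  then have run: "consensus_run F (th(k := th j)) (embed s)"
    using assms by (simp add: legal_def legal_g_def admissible_types_def)
  have "\<exists>v j'. d = Val v \<and> is_top (th j') v" if dec: "decides F (th(k := th j)) (embed s) i d" for i d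
  proof -
    obtain v j' where "d = Val v" "is_top ((th(k := th j)) j') v"
      using run dec unfolding consensus_run_def by blast
    then show ?thesis by (cases "j' = k") auto
  qed
  with run show "consensus_run F th (deviate s {k, j} (copy_type k j s))"
    unfolding consensus_run_def decides_deviate_copy_type by blast
qed

lemma utility_gain_copy_type:
  assumes "legal f s" and "utility_fun u"
    and "admissible_fp f F" and th: "admissible_types th" and "correct F j"
    and "decides F th (embed s) j (Val x)"
    and "decides F (th(k := th j)) (embed s) j (Val y)"
    and "(x, y) \<in> th j"
  shows "utility u F th (embed s) j < utility u F th (deviate s {k, j} (copy_type k j s)) j"
proof -
  have "consensus_run F th (embed s)"
    using assms unfolding legal_def legal_g_def by blast
  then have "utility u F th (embed s) j = ereal (u j (th j) x)"
    using assms(5,6) by (rule utility_eq_decision)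
  moreover have "consensus_run F th (deviate s {k, j} (copy_type k j s))"
    using legal_deviate_copy_type[OF assms(1)] assms(3,4) unfolding legal_g_def by blast
  then have "utility u F th (deviate s {k, j} (copy_type k j s)) j = ereal (u j (th j) y)"
    using assms by (simp add: utility_eq_decision decides_deviate_copy_type)
  moreover have "u j (th j) x < u j (th j) y"
    using assms th unfolding utility_fun_def admissible_types_def by blast
  ultimately show ?thesis by simp
qed

lemma exists_strict_linear_order_with_top:
  fixes a :: "'v::countable"
  obtains th where "strict_linear_order th" and "\<And>v. is_top th v \<longleftrightarrow> v = a"
proof
  define rank where "rank v = (if v = a then 0 else Suc (to_nat v))" for v
  have "inj rank" by (rule injI) (auto simp: rank_def split: if_splits)
  then show "strict_linear_order {(x, y). rank y < rank x}"
    unfolding strict_linear_order_on_def trans_def irrefl_def total_on_def inj_def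
    by (auto simp: linorder_neq_iff) (metis linorder_neqE_nat)
  show "is_top {(x, y). rank y < rank x} v \<longleftrightarrow> v = a" for v
    unfolding is_top_def rank_def by auto
qed

lemma finite_set_pivot:
  assumes "finite S" and "P S" and "\<not> P {}"
  shows "\<exists>T \<subseteq> S. \<exists>k \<in> T. P T \<and> \<not> P (T - {k})"
  using assms
proof (induction S rule: finite_induct)
  case (insert x S)
  show ?case
  proof (cases "P S")
    case True
    then show ?thesis using insert by blast
  next
    case False
    then show ?thesis using insert by (intro exI[of _ "insert x S"]) auto
  qed
qed simp

lemma ex_neq_if_two_le_card:
  assumes "2 \<le> card (UNIV :: 'a set)"
  shows "\<exists>j. j \<noteq> (k :: 'a)"
proof (rule ccontr)
  assume "\<nexists>j. j \<noteq> k"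
  then have "UNIV = {k}" by auto
  then show False using assms by (simp add: \<open>UNIV = {k}\<close>)
qed

definition two_types :: "'v rel \<Rightarrow> 'v rel \<Rightarrow> 'ag set \<Rightarrow> 'ag \<Rightarrow> 'v rel" where
  "two_types A B S = (\<lambda>i. if i \<in> S then B else A)"

lemma admissible_types_two_types:
  assumes "strict_linear_order A" and "strict_linear_order B"
  shows "admissible_types (two_types A B S)"
  using assms by (simp add: admissible_types_def two_types_def)

lemma two_types_copy_outside:
  assumes "j \<notin> S"
  shows "(two_types A B S)(k := two_types A B S j) = two_types A B (S - {k})"
  using assms by (auto simp: two_types_def fun_eq_iff)

lemma two_types_copy_inside:
  assumes "j \<in> S" and "j \<noteq> k"
  shows "(two_types A B S)(k := two_types A B S j) = two_types A B (insert k S)"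
  using assms by (auto simp: two_types_def fun_eq_iff)

lemma failure_free_decision_two_types:
  fixes sg :: "('ag, 'm, 'v) gprofile"
  assumes "legal_g f sg" and "strict_linear_order A" and "strict_linear_order B"
    and "\<And>v. is_top A v \<longleftrightarrow> v = a" and "\<And>v. is_top B v \<longleftrightarrow> v = b"
  obtains v where "\<And>i d. decides UNIV (two_types A B S) sg i d \<longleftrightarrow> d = Val v"
    and "v = a \<and> S \<noteq> UNIV \<or> v = b \<and> S \<noteq> {}"
proof -
  obtain v where "\<And>i d. decides UNIV (two_types A B S) sg i d \<longleftrightarrow> d = Val v"
      and "\<exists>j. is_top (two_types A B S j) v"
    by (rule failure_free_decision[OF assms(1) admissible_types_two_types[OF assms(2,3)]]) blast
  moreover from this(2) have "v = a \<and> S \<noteq> UNIV \<or> v = b \<and> S \<noteq> {}"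
    using assms(4,5) by (auto simp: two_types_def split: if_splits)
  ultimately show thesis using that by blast
qed

lemma profitable_type_copy_at_pivot:
  assumes "is_top A a" and "is_top B b" and "a \<noteq> b" and "k \<in> S" and "j \<noteq> k"
    and b_S: "\<And>i. decides UNIV (two_types A B S) sg i (Val b)"
    and a_S_minus_k: "\<And>i. decides UNIV (two_types A B (S - {k})) sg i (Val a)"
  obtains th x y where "th = two_types A B S \<or> th = two_types A B (S - {k})"
    and "decides UNIV th sg j (Val x)" and "decides UNIV (th(k := th j)) sg j (Val y)"
    and "(x, y) \<in> th j"
proof (cases "j \<in> S")
  case True
  then have "two_types A B (S - {k}) j = B"
    using \<open>j \<noteq> k\<close> by (simp add: two_types_def)
  moreover have "(two_types A B (S - {k}))(k := two_types A B (S - {k}) j) = two_types A B S"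
    using True \<open>k \<in> S\<close> \<open>j \<noteq> k\<close> two_types_copy_inside[of j "S - {k}" k] by (simp add: insert_absorb)
  moreover have "(a, b) \<in> B"
    using assms(2,3) unfolding is_top_def by simp
  ultimately show thesis
    using a_S_minus_k b_S by (intro that[of "two_types A B (S - {k})" a b]) auto
next
  case False
  then have "two_types A B S j = A"
    by (simp add: two_types_def)
  moreover have "(b, a) \<in> A"
    using assms(1,3) unfolding is_top_def by simp
  ultimately show thesis
    using b_S a_S_minus_k two_types_copy_outside[OF False, of A B k]
    by (intro that[of "two_types A B S" b a]) auto
qed

lemma exists_profitable_type_copy:
  fixes s :: "'ag::finite \<Rightarrow> ('ag, 'm, 'v::countable) strategy" and a b :: 'v
  assumes "legal f s" and "a \<noteq> b" and "2 \<le> card (UNIV :: 'ag set)"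
  obtains th k j x y where "admissible_types th" and "k \<noteq> j"
    and "decides UNIV th (embed s) j (Val x)"
    and "decides UNIV (th(k := th j)) (embed s) j (Val y)"
    and "(x, y) \<in> th j"
proof -
  obtain A where A: "strict_linear_order A" "\<And>v. is_top A v \<longleftrightarrow> v = a"
    using exists_strict_linear_order_with_top[of a] by blast
  obtain B where B: "strict_linear_order B" "\<And>v. is_top B v \<longleftrightarrow> v = b"
    using exists_strict_linear_order_with_top[of b] by blast
  define P where "P S = decides UNIV (two_types A B S) (embed s) undefined (Val b)" for S
  have decision: "decides UNIV (two_types A B S) (embed s) i (Val (if P S then b else a))"
    and P_UNIV: "S = UNIV \<Longrightarrow> P S" and not_P_empty: "S = {} \<Longrightarrow> \<not> P S" for S i
  proof -
    obtain v where v: "\<And>i d. decides UNIV (two_types A B S) (embed s) i d \<longleftrightarrow> d = Val v"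
        and a_or_b: "v = a \<and> S \<noteq> UNIV \<or> v = b \<and> S \<noteq> {}"
      using assms(1) unfolding legal_def
      by (rule failure_free_decision_two_types[OF _ A(1) B(1) A(2) B(2), where S = S]) blast
    then have "P S \<longleftrightarrow> v = b" by (auto simp: P_def)
    then show "decides UNIV (two_types A B S) (embed s) i (Val (if P S then b else a))"
      and "S = UNIV \<Longrightarrow> P S" and "S = {} \<Longrightarrow> \<not> P S"
      using a_or_b assms(2) v by auto
  qed
  obtain S k where "k \<in> S" and "P S" and "\<not> P (S - {k})"
    using finite_set_pivot[of UNIV P] P_UNIV not_P_empty by auto
  obtain j where "j \<noteq> k"
    using ex_neq_if_two_le_card[OF assms(3)] by blast
  have b_S: "decides UNIV (two_types A B S) (embed s) i (Val b)"
    and a_S_minus_k: "decides UNIV (two_types A B (S - {k})) (embed s) i (Val a)" for i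
    using decision[of S i] decision[of "S - {k}" i] \<open>P S\<close> \<open>\<not> P (S - {k})\<close> by simp_all
  obtain th x y where th: "th = two_types A B S \<or> th = two_types A B (S - {k})"
    and dx: "decides UNIV th (embed s) j (Val x)"
    and dy: "decides UNIV (th(k := th j)) (embed s) j (Val y)" and xy: "(x, y) \<in> th j"
    by (rule profitable_type_copy_at_pivot[OF A(2)[of a, THEN iffD2, OF refl] B(2)[of b, THEN iffD2, OF refl] assms(2)
        \<open>k \<in> S\<close> \<open>j \<noteq> k\<close> b_S a_S_minus_k])
  have "admissible_types th"
    using th admissible_types_two_types[OF A(1) B(1)] by auto
  then show thesis
    using \<open>j \<noteq> k\<close>[symmetric] dx dy xy by (rule that)
qed

lemma not_resilient_weak:
  fixes s :: "'ag::finite \<Rightarrow> ('ag, 'm, 'v::countable) strategy" and a b :: 'v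
  assumes "utility_fun u" and "a \<noteq> b" and "2 \<le> card (UNIV :: 'ag set)" and "2 \<le> c"
  shows "\<not> resilient_weak u c f s"
proof
  assume resilient: "resilient_weak u c f s"
  then have legal: "legal f s" by (simp add: resilient_weak_def)
  obtain th k j x y where th: "admissible_types th" and "k \<noteq> j"
    and "decides UNIV th (embed s) j (Val x)"
    and "decides UNIV (th(k := th j)) (embed s) j (Val y)" and "(x, y) \<in> th j"
    using exists_profitable_type_copy[OF legal assms(2,3)] .
  then have "utility u UNIV th (embed s) j < utility u UNIV th (deviate s {k, j} (copy_type k j s)) j"
    using utility_gain_copy_type[OF legal assms(1)] by simp
  then have "can_manipulate_weak u f {k, j} s"
    unfolding can_manipulate_weak_def
    using colluder_strategy_copy_type legal_deviate_copy_type[OF legal] th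
    by (intro exI[of _ "copy_type k j s"] conjI exI[of _ UNIV] exI[of _ th]) auto
  moreover have "card {k, j} \<le> c" using \<open>k \<noteq> j\<close> assms(4) by simp
  ultimately show False using resilient by (simp add: resilient_weak_def)
qed

lemma not_resilient_pareto:
  fixes s :: "'ag::finite \<Rightarrow> ('ag, 'm, 'v::countable) strategy" and a b :: 'v
  assumes "utility_fun u" and "a \<noteq> b" and "2 \<le> card (UNIV :: 'ag set)" and "2 \<le> c"
    and "1 \<le> f"
  shows "\<not> resilient_pareto u c f s"
proof
  assume resilient: "resilient_pareto u c f s"
  then have legal: "legal f s" by (simp add: resilient_pareto_def)
  obtain th k j x y where th: "admissible_types th" and "k \<noteq> j"
    and dx: "decides UNIV th (embed s) j (Val x)"
    and dy: "decides UNIV (th(k := th j)) (embed s) j (Val y)" and "(x, y) \<in> th j"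
    using exists_profitable_type_copy[OF legal assms(2,3)] .
  obtain R0 where x: "\<forall>R \<ge> R0. decides (crash_after k R) th (embed s) j (Val x)"
    using decides_crash_after[OF dx \<open>k \<noteq> j\<close>[symmetric]] by blast
  obtain R1 where y: "\<forall>R \<ge> R1. decides (crash_after k R) (th(k := th j)) (embed s) j (Val y)"
    using decides_crash_after[OF dy \<open>k \<noteq> j\<close>[symmetric]] by blast
  define F where "F = crash_after k (max R0 R1)"
  have "utility u F th (embed s) j < utility u F th (deviate s {k, j} (copy_type k j s)) j"
    unfolding F_def using \<open>k \<noteq> j\<close> \<open>(x, y) \<in> th j\<close> x y
    by (intro utility_gain_copy_type[OF legal assms(1) admissible_fp_crash_after[OF assms(5)] th]) auto
  moreover have "utility u F th sg k = 0" for sg :: "('ag, 'm, 'v) gprofile"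
    by (simp add: F_def utility_def)
  ultimately have "can_manipulate_pareto u f {k, j} s"
    unfolding can_manipulate_pareto_def
    using colluder_strategy_copy_type legal_deviate_copy_type[OF legal] th
      admissible_fp_crash_after[OF assms(5)]
    by (intro exI[of _ "copy_type k j s"] conjI exI[of _ F] exI[of _ th]) (auto simp: F_def)
  moreover have "card {k, j} \<le> c" using \<open>k \<noteq> j\<close> assms(4) by simp
  ultimately show False using resilient by (simp add: resilient_pareto_def)
qed

theorem proposition3:
  fixes u :: "'ag::finite \<Rightarrow> 'v::finite rel \<Rightarrow> 'v \<Rightarrow> real"
  assumes "card (UNIV :: 'v set) \<ge> 3"
    and "card (UNIV :: 'ag set) \<ge> 2"
    and "utility_fun u"
  shows "(\<forall>c f. c \<ge> 2 \<longrightarrow>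
            \<not> (\<exists>s :: 'ag \<Rightarrow> ('ag, 'm, 'v) strategy. resilient_weak u c f s)) \<and>
         (\<forall>c f. c \<ge> 2 \<longrightarrow> f \<ge> 1 \<longrightarrow>
            \<not> (\<exists>s :: 'ag \<Rightarrow> ('ag, 'm, 'v) strategy. resilient_pareto u c f s))"
proof -
  have "\<exists>a :: 'v. a \<noteq> undefined"
    by (rule ex_neq_if_two_le_card) (use assms(1) in simp)
  then obtain a :: 'v where "a \<noteq> undefined" ..
  show ?thesis
  proof (intro conjI allI impI notI)
    fix c f :: nat
    assume "2 \<le> c" and "\<exists>s :: 'ag \<Rightarrow> ('ag, 'm, 'v) strategy. resilient_weak u c f s"
    then show False
      using not_resilient_weak[OF assms(3) \<open>a \<noteq> undefined\<close> assms(2) \<open>2 \<le> c\<close>] by auto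
  next
    fix c f :: nat
    assume "2 \<le> c" and "1 \<le> f"
      and "\<exists>s :: 'ag \<Rightarrow> ('ag, 'm, 'v) strategy. resilient_pareto u c f s"
    then show False
      using not_resilient_pareto[OF assms(3) \<open>a \<noteq> undefined\<close> assms(2) \<open>2 \<le> c\<close> \<open>1 \<le> f\<close>]
      by auto
  qed
qed

end
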